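(* Let $p$ be an odd prime and $M$ the sub-add move matrix, with $t$, $k$, $i$ as in the context. (a) If $t$ is even, then $\Gamma_{M,\,p}$ has no secondary cycles. (b) If $t\equiv1\pmod 4$ and $(1+i)^t=i$, then all secondary cycles have length $t$. (c) If $t\equiv3\pmod4$ and $(1+i)^t=i$, then all secondary cycles have length $2t$. (d) If $t\equiv1\pmod4$ and $(1+i)^t=-i$, then all secondary cycles have length $2t$. (e) If $t\equiv3\pmod4$ and $(1+i)^t=-i$, then all secondary cycles have length $t$.
   Context: The sub-add move matrix is $M=\begin{pmatrix}1&-1\\1&1\end{pmatrix}$. $\Gamma_{M,\,p}$ is the directed graph with vertex set $\mathbb Z_p^2$ and arcs $((a,b),(a-b,a+b))$ (mod $p$; loops allowed). A directed cycle is a cycle in the underlying undirected graph such that in the induced directed subgraph every vertex has in- and out-degree $1$; a loop is a directed $1$-cycle. Let $t$ be the multiplicative order of $-4$ in $GF(p)$ and $k=4t$ (the $\mathbb Z_p$-order of $M$). Let $i\in GF(p^2)$ with $i^2=-1$, chosen so that ${\rm ord}(1-i)\le{\rm ord}(1+i)$ (multiplicative orders). A primary cycle is a directed cycle of length $k$; a secondary cycle is a directed cycle that is neither primary nor a $1$-cycle. *)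

theory Defs
  imports "HOL-Number_Theory.Number_Theory"
begin

(* The sub-add move on Z_p^2, vertices represented by pairs of integers in {0..<p} *)
definition subadd :: "nat \<Rightarrow> int \<times> int \<Rightarrow> int \<times> int" where
  "subadd p v = ((fst v - snd v) mod int p, (fst v + snd v) mod int p)"

definition verts :: "nat \<Rightarrow> (int \<times> int) set" where
  "verts p = {0..<int p} \<times> {0..<int p}"

definition arc :: "nat \<Rightarrow> int \<times> int \<Rightarrow> int \<times> int \<Rightarrow> bool" where
  "arc p u v \<longleftrightarrow> u \<in> verts p \<and> v = subadd p u"

definition dcycle :: "nat \<Rightarrow> (int \<times> int) list \<Rightarrow> bool" where
  "dcycle p cs \<longleftrightarrow> cs \<noteq> [] \<and> distinct cs \<and> set cs \<subseteq> verts p \<and>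
     (\<forall>j < length cs. arc p (cs ! j) (cs ! ((j + 1) mod length cs)))"

(* t = multiplicative order of -4 in GF(p) *)
definition tord :: "nat \<Rightarrow> nat" where
  "tord p = ord p (nat ((-4) mod int p))"

(* primary cycle: directed cycle of length k = 4t;
   secondary: directed cycle neither primary nor a 1-cycle *)
definition secondary_cycle :: "nat \<Rightarrow> (int \<times> int) list \<Rightarrow> bool" where
  "secondary_cycle p cs \<longleftrightarrow> dcycle p cs \<and> length cs \<noteq> 4 * tord p \<and> length cs \<noteq> 1"

definition mord :: "'a::field \<Rightarrow> nat" where
  "mord x = (if \<exists>n>0. x ^ n = 1 then (LEAST n. n > 0 \<and> x ^ n = 1) else 0)"

end

theory Submission
  imports Defs
begin

text \<open>
  Over \<open>\<int>\<close> we have \<open>M\<^sup>4 = -4 I\<close>, so a vertex \<open>v \<noteq> 0\<close> of a cycle of length \<open>d\<close>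
  satisfies \<open>d | 4q \<longleftrightarrow> t | q\<close>. Hence \<open>t | d | 4t\<close> and a cycle that is not primary has
  length dividing \<open>2t\<close>; for even \<open>t\<close>, \<open>d | 2t = 4(t/2)\<close> would give \<open>t | t/2\<close>.

  Over \<open>GF(p\<^sup>2)\<close> the coordinates \<open>a + b i\<close> and \<open>a - b i\<close> diagonalise \<open>M\<close> with eigenvalues
  \<open>1 + i\<close> and \<open>1 - i\<close>. If \<open>(1 + i)\<^sup>t = \<plusminus>i\<close> then \<open>(1 + i)\<^bsup>2t\<^esup> = -1\<close>, so the first
  coordinate vanishes on a secondary cycle and its length is the order of \<open>1 - i\<close>.
  Finally \<open>1 - i = -i (1 + i)\<close> gives \<open>(1 - i)\<^sup>t = \<plusminus>1\<close> according to \<open>t mod 4\<close> and the sign,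
  i.e. length \<open>t\<close> or \<open>2t\<close>.
\<close>

lemma subadd_mod_mod: "subadd p (a mod int p, b mod int p) = subadd p (a, b)"
  by (simp add: subadd_def mod_simps)

lemma subadd_subadd: "subadd p (subadd p (a, b)) = ((-2 * b) mod int p, (2 * a) mod int p)"
proof -
  have "subadd p (subadd p (a, b)) = subadd p (a - b, a + b)"
    by (simp add: subadd_def[of p "(a, b)"] subadd_mod_mod)
  then show ?thesis by (simp add: subadd_def)
qed

lemma subadd_funpow_four: "(subadd p ^^ 4) (a, b) = ((-4 * a) mod int p, (-4 * b) mod int p)"
proof -
  have "(subadd p ^^ 4) (a, b) = subadd p (subadd p (subadd p (subadd p (a, b))))"
    by (simp add: numeral_eq_Suc)
  also have "\<dots> = subadd p (subadd p (-2 * b, 2 * a))"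
    by (simp add: subadd_subadd subadd_mod_mod)
  finally show ?thesis by (simp add: subadd_subadd)
qed

lemma subadd_funpow_four_mult:
  assumes "(a, b) \<in> verts p"
  shows "(subadd p ^^ (4 * q)) (a, b) = ((-4) ^ q * a mod int p, (-4) ^ q * b mod int p)"
proof (induction q)
  case 0
  then show ?case using assms by (simp add: verts_def)
next
  case (Suc q)
  have "(subadd p ^^ (4 * Suc q)) (a, b) = (subadd p ^^ 4) ((subadd p ^^ (4 * q)) (a, b))"
    by (simp only: mult_Suc_right funpow_add o_apply)
  also have "\<dots> = ((-4) * ((-4) ^ q * a) mod int p, (-4) * ((-4) ^ q * b) mod int p)"
    by (simp only: Suc.IH subadd_funpow_four mod_mult_right_eq)
  finally show ?case by (simp add: mult.assoc)
qed

lemma funpow_subadd_in_verts: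
  assumes "p > 0" "v \<in> verts p"
  shows "(subadd p ^^ n) v \<in> verts p"
  using assms by (induction n) (auto simp: subadd_def verts_def)

lemma cong_neg_four_power_iff_tord_dvd:
  assumes "p > 0"
  shows "[(-4::int) ^ q = 1] (mod int p) \<longleftrightarrow> tord p dvd q"
proof -
  have "[(-4::int) ^ q = 1] (mod int p) \<longleftrightarrow> [int (nat ((-4) mod int p)) ^ q = int 1] (mod int p)"
    using assms by (simp add: cong_def power_mod)
  also have "\<dots> \<longleftrightarrow> [nat ((-4) mod int p) ^ q = 1] (mod p)"
    by (metis cong_int_iff of_nat_power)
  finally show ?thesis
    unfolding tord_def ord_divides .
qed

lemma cong_mult_self_iff:
  fixes c :: int
  assumes "prime p" "0 < c" "c < int p"
  shows "[u * c = c] (mod int p) \<longleftrightarrow> [u = 1] (mod int p)"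
proof -
  have "\<not> int p dvd c"
    using assms by (auto dest: zdvd_imp_le)
  then have "coprime c (int p)"
    using assms(1) by (metis prime_imp_coprime prime_nat_int_transfer coprime_commute)
  then show ?thesis
    using cong_mult_rcancel[of c "int p" u 1] by simp
qed

lemma subadd_funpow_four_mult_eq_iff:
  assumes "prime p" "v \<in> verts p" "v \<noteq> (0, 0)"
  shows "(subadd p ^^ (4 * q)) v = v \<longleftrightarrow> tord p dvd q"
proof -
  obtain a b where v: "v = (a, b)" by fastforce
  have range: "0 \<le> a" "a < int p" "0 \<le> b" "b < int p"
    using assms(2) v by (auto simp: verts_def)
  have coord: "x mod int p = c \<longleftrightarrow> [x = c] (mod int p)" if "0 \<le> c" "c < int p" for x c
    using that by (auto simp: cong_def)
  have "(subadd p ^^ (4 * q)) v = v \<longleftrightarrow>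
      [(-4) ^ q * a = a] (mod int p) \<and> [(-4) ^ q * b = b] (mod int p)"
    using v range assms(2) by (simp add: subadd_funpow_four_mult coord)
  also have "\<dots> \<longleftrightarrow> [(-4::int) ^ q = 1] (mod int p)"
  proof
    assume "[(-4) ^ q * a = a] (mod int p) \<and> [(-4) ^ q * b = b] (mod int p)"
    moreover have "a \<noteq> 0 \<or> b \<noteq> 0"
      using assms(3) v by simp
    ultimately show "[(-4::int) ^ q = 1] (mod int p)"
      using cong_mult_self_iff[OF assms(1)] range by force
  next
    assume "[(-4::int) ^ q = 1] (mod int p)"
    then show "[(-4) ^ q * a = a] (mod int p) \<and> [(-4) ^ q * b = b] (mod int p)"
      using cong_scalar_right[of "(-4) ^ q" 1 "int p"] by simp
  qed
  also have "\<dots> \<longleftrightarrow> tord p dvd q"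
    using assms(1) by (simp add: cong_neg_four_power_iff_tord_dvd prime_gt_0_nat)
  finally show ?thesis .
qed

lemma dcycle_funpow_start:
  assumes "dcycle p cs"
  shows "(subadd p ^^ n) (cs ! 0) = cs ! (n mod length cs)"
proof -
  have step: "subadd p (cs ! j) = cs ! (Suc j mod length cs)" if "j < length cs" for j
    using assms that by (simp add: dcycle_def arc_def)
  have nth: "(subadd p ^^ j) (cs ! 0) = cs ! j" if "j < length cs" for j
    using that by (induction j) (simp_all add: step)
  have pos: "length cs > 0"
    using assms by (simp add: dcycle_def)
  obtain d where d: "length cs = Suc d"
    using pos gr0_implies_Suc by blast
  have "(subadd p ^^ length cs) (cs ! 0) = cs ! 0"
    using step[of d] nth[of d] d by simp
  then have "(subadd p ^^ n) (cs ! 0) = (subadd p ^^ (n mod length cs)) (cs ! 0)"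
    by (simp add: funpow_mod_eq)
  then show ?thesis
    using nth pos by simp
qed

lemma dcycle_funpow_start_eq_iff:
  assumes "dcycle p cs"
  shows "(subadd p ^^ n) (cs ! 0) = cs ! 0 \<longleftrightarrow> length cs dvd n"
  using assms
  by (auto simp: dcycle_funpow_start dcycle_def nth_eq_iff_index_eq dvd_eq_mod_eq_0)

lemma dcycle_start:
  assumes "dcycle p cs" "length cs \<noteq> 1"
  shows "cs ! 0 \<in> verts p" "cs ! 0 \<noteq> (0, 0)"
proof -
  show "cs ! 0 \<in> verts p"
    using assms(1) by (auto simp: dcycle_def)
  have "subadd p (0, 0) = (0, 0)"
    by (simp add: subadd_def)
  then show "cs ! 0 \<noteq> (0, 0)"
    using dcycle_funpow_start_eq_iff[OF assms(1), of 1] assms(2) by auto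
qed

lemma dcycle_length_dvd_four_mult_iff:
  assumes "prime p" "dcycle p cs" "length cs \<noteq> 1"
  shows "length cs dvd 4 * q \<longleftrightarrow> tord p dvd q"
  using subadd_funpow_four_mult_eq_iff[OF assms(1) dcycle_start[OF assms(2,3)]]
  by (simp add: dcycle_funpow_start_eq_iff[OF assms(2)])

lemma secondary_cycle_length_dvd:
  assumes "prime p" "secondary_cycle p cs"
  shows "tord p dvd length cs" "length cs dvd 2 * tord p"
proof -
  have cyc: "dcycle p cs" and len: "length cs \<noteq> 1" "length cs \<noteq> 4 * tord p"
    using assms(2) by (auto simp: secondary_cycle_def)
  note dvd_iff = dcycle_length_dvd_four_mult_iff[OF assms(1) cyc len(1)]
  show "tord p dvd length cs"
    using dvd_iff[of "length cs"] by simp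
  then obtain f where f: "length cs = tord p * f" ..
  have "tord p > 0"
    using f cyc by (simp add: dcycle_def flip: length_greater_0_conv)
  moreover have "tord p * f dvd tord p * 4"
    using dvd_iff[of "tord p"] f by (simp add: mult.commute)
  ultimately have "f dvd 4"
    by simp
  moreover have "f \<noteq> 4"
    using f len(2) by simp
  moreover have "f \<in> {0, 1, 2, 3, 4}"
    using dvd_imp_le[OF \<open>f dvd 4\<close>] by auto
  ultimately have "f dvd 2"
    by auto
  then show "length cs dvd 2 * tord p"
    using f by (simp add: mult.commute)
qed

lemma no_secondary_cycle_if_even_tord:
  assumes "prime p" "even (tord p)"
  shows "\<not> secondary_cycle p cs"
proof
  assume sec: "secondary_cycle p cs"
  obtain m where m: "tord p = 2 * m"
    using assms(2) ..
  have "length cs dvd 4 * m"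
    using secondary_cycle_length_dvd(2)[OF assms(1) sec] m by simp
  then have "tord p dvd m"
    using sec dcycle_length_dvd_four_mult_iff[OF assms(1)] by (simp add: secondary_cycle_def)
  moreover have "tord p > 0"
    using secondary_cycle_length_dvd(1)[OF assms(1) sec] sec
    by (auto simp: secondary_cycle_def dcycle_def)
  ultimately show False
    using m by (simp add: dvd_imp_le)
qed

lemma CHAR_eq_if_card_eq_prime_power:
  assumes "prime p" "card (UNIV :: 'a::{idom, finite} set) = p ^ n"
  shows "CHAR('a) = p"
proof -
  have "prime CHAR('a)"
    by (simp add: finite_imp_CHAR_pos prime_CHAR_semidom)
  moreover have "CHAR('a) dvd p ^ n"
    using CHAR_dvd_CARD[where 'a = 'a] assms(2) by simp
  ultimately show ?thesis
    using assms(1) by (metis prime_dvd_power primes_dvd_imp_eq)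
qed

lemma two_neq_zero_if_odd_CHAR:
  assumes "odd CHAR('a::ring_1)"
  shows "(2::'a) \<noteq> 0"
proof
  assume "(2::'a) = 0"
  then have "CHAR('a) dvd 2"
    using of_nat_eq_0_iff_char_dvd[of 2, where 'a = 'a] by simp
  then have "CHAR('a) \<in> {1, 2}"
    using dvd_imp_le[of "CHAR('a)" 2] by (auto simp: le_Suc_eq numeral_2_eq_2)
  then show False
    using assms by auto
qed

lemma minus_one_neq_one_if_odd_CHAR:
  assumes "odd CHAR('a::ring_1)"
  shows "(-1::'a) \<noteq> 1"
  using two_neq_zero_if_odd_CHAR[OF assms] by (metis one_add_one neg_eq_iff_add_eq_0)

lemma of_int_eq_iff_eq_if_CHAR:
  assumes "CHAR('a::ring_1) = p" "0 \<le> x" "x < int p" "0 \<le> y" "y < int p"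
  shows "(of_int x :: 'a) = of_int y \<longleftrightarrow> x = y"
  using assms by (simp add: of_int_eq_iff_cong_CHAR cong_def)

lemma one_minus_imag_power:
  fixes i :: "'a::comm_ring_1"
  assumes "i ^ 2 = -1"
  shows "n mod 4 = 1 \<Longrightarrow> (1 - i) ^ n = - i * (1 + i) ^ n"
    and "n mod 4 = 3 \<Longrightarrow> (1 - i) ^ n = i * (1 + i) ^ n"
proof -
  have "(-i) ^ 4 = ((-i) ^ 2) ^ 2"
    by (simp flip: power_mult)
  then have "(-i) ^ 4 = 1"
    using assms by simp
  have "1 - i = -i * (1 + i)"
    using assms by (simp add: algebra_simps power2_eq_square)
  then have "(1 - i) ^ n = (-i) ^ n * (1 + i) ^ n"
    by (simp only: power_mult_distrib)
  moreover have "(-i) ^ n = (-i) ^ (4 * (n div 4) + n mod 4)"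
    by simp
  ultimately have split: "(1 - i) ^ n = (-i) ^ (n mod 4) * (1 + i) ^ n"
    using \<open>(-i) ^ 4 = 1\<close> by (simp only: power_add power_mult power_one mult_1)
  show "(1 - i) ^ n = - i * (1 + i) ^ n" if "n mod 4 = 1"
    using split that by simp
  show "(1 - i) ^ n = i * (1 + i) ^ n" if "n mod 4 = 3"
    using split that assms by (simp add: power3_eq_cube power2_eq_square)
qed

definition eigencoord :: "'a::ring_1 \<Rightarrow> int \<times> int \<Rightarrow> 'a" where
  "eigencoord j v = of_int (fst v) + of_int (snd v) * j"

lemma eigencoord_subadd:
  fixes j :: "'a::comm_ring_1"
  assumes "CHAR('a) = p" "j ^ 2 = -1"
  shows "eigencoord j (subadd p v) = (1 + j) * eigencoord j v"
proof -
  have of_int_mod: "of_int (x mod int p) = (of_int x :: 'a)" for x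
    using assms(1) by (simp add: of_int_eq_iff_cong_CHAR)
  have "eigencoord j (subadd p v) = of_int (fst v - snd v) + of_int (fst v + snd v) * j"
    by (simp add: eigencoord_def subadd_def of_int_mod)
  also have "\<dots> = (1 + j) * eigencoord j v"
    using assms(2) by (simp add: eigencoord_def algebra_simps power2_eq_square flip: mult.assoc)
  finally show ?thesis .
qed

lemma eigencoord_funpow_subadd:
  fixes j :: "'a::comm_ring_1"
  assumes "CHAR('a) = p" "j ^ 2 = -1"
  shows "eigencoord j ((subadd p ^^ n) v) = (1 + j) ^ n * eigencoord j v"
  by (induction n) (simp_all add: eigencoord_subadd[OF assms])

lemma eigencoord_inj:
  fixes i :: "'a::field"
  assumes "CHAR('a) = p" "odd p" "i ^ 2 = -1" "u \<in> verts p" "v \<in> verts p"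
    and "eigencoord i u = eigencoord i v" "eigencoord (-i) u = eigencoord (-i) v"
  shows "u = v"
proof -
  obtain a b c d where uv: "u = (a, b)" "v = (c, d)"
    by fastforce
  have two: "(2::'a) \<noteq> 0"
    using assms(1,2) two_neq_zero_if_odd_CHAR by blast
  have "i \<noteq> 0"
    using assms(3) by auto
  have sum_diff: "of_int a + of_int b * i = (of_int c + of_int d * i :: 'a)"
    "of_int a - of_int b * i = (of_int c - of_int d * i :: 'a)"
    using assms(6,7) uv by (simp_all add: eigencoord_def)
  have "2 * (of_int a :: 'a) = (of_int a + of_int b * i) + (of_int a - of_int b * i)"
    by simp
  also have "\<dots> = 2 * of_int c"
    unfolding sum_diff by simp
  finally have "2 * (of_int a :: 'a) = 2 * of_int c" .
  have "2 * (of_int b * i :: 'a) = (of_int a + of_int b * i) - (of_int a - of_int b * i)"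
    by simp
  also have "\<dots> = 2 * (of_int d * i)"
    unfolding sum_diff by simp
  finally have "2 * (of_int b * i :: 'a) = 2 * (of_int d * i)" .
  with \<open>2 * (of_int a :: 'a) = 2 * of_int c\<close> have "(of_int a :: 'a) = of_int c" "(of_int b :: 'a) = of_int d"
    using two \<open>i \<noteq> 0\<close> by simp_all
  then show ?thesis
    using assms(1,4,5) uv by (simp add: verts_def of_int_eq_iff_eq_if_CHAR)
qed

lemma secondary_cycle_length_dvd_iff:
  fixes i :: "'a::field"
  assumes "prime p" "odd p" "CHAR('a) = p" "i ^ 2 = -1"
    and "(1 + i) ^ (2 * tord p) \<noteq> 1" "secondary_cycle p cs"
  shows "length cs dvd n \<longleftrightarrow> (1 - i) ^ n = 1"
proof -
  define v where "v = cs ! 0"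
  have cyc: "dcycle p cs" and len: "length cs \<noteq> 1"
    using assms(6) by (auto simp: secondary_cycle_def)
  have v: "v \<in> verts p" "v \<noteq> (0, 0)"
    unfolding v_def using dcycle_start[OF cyc len] by auto
  have period: "(subadd p ^^ m) v = v \<longleftrightarrow> length cs dvd m" for m
    using dcycle_funpow_start_eq_iff[OF cyc] v_def by simp
  have "(-i) ^ 2 = (-1::'a)"
    using assms(4) by simp
  note plus = eigencoord_funpow_subadd[OF assms(3,4)]
    and minus = eigencoord_funpow_subadd[OF assms(3) \<open>(-i) ^ 2 = -1\<close>, simplified]
  have plus_zero: "eigencoord i v = 0"
  proof (rule ccontr)
    assume "eigencoord i v \<noteq> 0"
    moreover have "(1 + i) ^ length cs * eigencoord i v = eigencoord i v"
      using period[of "length cs"] plus[of "length cs" v] by simp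
    ultimately have "(1 + i) ^ length cs = 1"
      by simp
    moreover obtain k where "2 * tord p = length cs * k"
      using secondary_cycle_length_dvd(2)[OF assms(1,6)] ..
    ultimately show False
      using assms(5) by (simp add: power_mult)
  qed
  have "p > 0"
    using assms(1) prime_gt_0_nat by blast
  then have minus_nonzero: "eigencoord (-i) v \<noteq> 0"
    using eigencoord_inj[OF assms(3,2,4) v(1), of "(0, 0)"] plus_zero v(2)
    by (auto simp: verts_def eigencoord_def)
  have "(subadd p ^^ n) v = v \<longleftrightarrow> (1 - i) ^ n = 1"
  proof
    assume "(subadd p ^^ n) v = v"
    then show "(1 - i) ^ n = 1"
      using minus[of n v] minus_nonzero by simp
  next
    assume "(1 - i) ^ n = 1"
    then show "(subadd p ^^ n) v = v"
      using eigencoord_inj[OF assms(3,2,4) funpow_subadd_in_verts[OF \<open>p > 0\<close> v(1)] v(1)]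
        plus[of n v] minus[of n v] plus_zero by simp
  qed
  then show ?thesis
    using period by simp
qed

lemma secondary_cycle_length_cases:
  fixes i :: "'a::field"
  assumes "prime p" "odd p" "CHAR('a) = p" "i ^ 2 = -1"
    and "(1 + i) ^ tord p = i \<or> (1 + i) ^ tord p = - i" "secondary_cycle p cs"
  shows "(1 - i) ^ tord p = 1 \<Longrightarrow> length cs = tord p"
    and "(1 - i) ^ tord p = -1 \<Longrightarrow> length cs = 2 * tord p"
proof -
  have "(-1::'a) \<noteq> 1"
    using minus_one_neq_one_if_odd_CHAR[where 'a = 'a] assms(2,3) by simp
  moreover have "(1 + i) ^ (2 * tord p) = ((1 + i) ^ tord p) ^ 2"
    by (simp flip: power_mult add: mult.commute)
  ultimately have "(1 + i) ^ (2 * tord p) \<noteq> 1"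
    using assms(4,5) by auto
  note dvd_iff = secondary_cycle_length_dvd_iff[OF assms(1-4) this assms(6)]
  have t_dvd: "tord p dvd length cs" and dvd_2t: "length cs dvd 2 * tord p"
    using secondary_cycle_length_dvd[OF assms(1,6)] by blast+
  show "length cs = tord p" if "(1 - i) ^ tord p = 1"
    using that dvd_iff t_dvd by (simp add: dvd_antisym)
  show "length cs = 2 * tord p" if "(1 - i) ^ tord p = -1"
  proof -
    have "\<not> length cs dvd tord p"
      using that dvd_iff \<open>(-1::'a) \<noteq> 1\<close> by simp
    moreover obtain f where f: "length cs = tord p * f"
      using t_dvd ..
    moreover have "tord p > 0"
      using f assms(6) by (simp add: secondary_cycle_def dcycle_def flip: length_greater_0_conv)
    ultimately have "f dvd 2" "f \<noteq> 1"
      using dvd_2t by (auto simp: mult.commute)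
    then have "f = 2"
      using dvd_imp_le[of f 2] by (cases f) (auto simp: le_Suc_eq numeral_2_eq_2)
    then show ?thesis
      using f by simp
  qed
qed

lemma secondary_cycle_length_odd_tord:
  fixes i :: "'a::field"
  assumes "prime p" "odd p" "CHAR('a) = p" "i ^ 2 = -1" "secondary_cycle p cs"
  shows "tord p mod 4 = 1 \<and> (1 + i) ^ tord p = i \<or> tord p mod 4 = 3 \<and> (1 + i) ^ tord p = - i
      \<Longrightarrow> length cs = tord p"
    and "tord p mod 4 = 3 \<and> (1 + i) ^ tord p = i \<or> tord p mod 4 = 1 \<and> (1 + i) ^ tord p = - i
      \<Longrightarrow> length cs = 2 * tord p"
proof -
  have i_sq: "i * i = -1"
    using assms(4) by (simp add: power2_eq_square)
  note lengths = secondary_cycle_length_cases[OF assms(1-4) _ assms(5)]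
    and minus_power = one_minus_imag_power[OF assms(4), of "tord p"]
  show "length cs = tord p"
    if "tord p mod 4 = 1 \<and> (1 + i) ^ tord p = i \<or> tord p mod 4 = 3 \<and> (1 + i) ^ tord p = - i"
    using that lengths(1) minus_power i_sq by auto
  show "length cs = 2 * tord p"
    if "tord p mod 4 = 3 \<and> (1 + i) ^ tord p = i \<or> tord p mod 4 = 1 \<and> (1 + i) ^ tord p = - i"
    using that lengths(2) minus_power i_sq by auto
qed

theorem theorem7p2:
  fixes p :: nat
  assumes "prime p" and "odd p"
  shows "(even (tord p) \<longrightarrow> (\<nexists>cs. secondary_cycle p cs)) \<and>
    (\<forall>i :: 'a :: {field, finite}.
       card (UNIV :: 'a set) = p ^ 2 \<and> i ^ 2 = -1 \<and> mord (1 - i) \<le> mord (1 + i) \<longrightarrow>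
       ((tord p mod 4 = 1 \<and> (1 + i) ^ tord p = i \<longrightarrow>
            (\<forall>cs. secondary_cycle p cs \<longrightarrow> length cs = tord p)) \<and>
        (tord p mod 4 = 3 \<and> (1 + i) ^ tord p = i \<longrightarrow>
            (\<forall>cs. secondary_cycle p cs \<longrightarrow> length cs = 2 * tord p)) \<and>
        (tord p mod 4 = 1 \<and> (1 + i) ^ tord p = - i \<longrightarrow>
            (\<forall>cs. secondary_cycle p cs \<longrightarrow> length cs = 2 * tord p)) \<and>
        (tord p mod 4 = 3 \<and> (1 + i) ^ tord p = - i \<longrightarrow>
            (\<forall>cs. secondary_cycle p cs \<longrightarrow> length cs = tord p))))"
proof (cases "card (UNIV :: 'a set) = p ^ 2")
  case True
  then have "CHAR('a) = p"
    using CHAR_eq_if_card_eq_prime_power[OF assms(1)] by blast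
  note lengths = secondary_cycle_length_odd_tord[OF assms this]
  show ?thesis
    using no_secondary_cycle_if_even_tord[OF assms(1)] lengths by blast
next
  case False
  then show ?thesis
    using no_secondary_cycle_if_even_tord[OF assms(1)] by blast
qed

end
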